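(* Let $(\Omega,\mathcal F,P)$ be a probability space, $\xi:\Omega\to\mathbb{R}^l$ a random vector with support $\Xi$ and distribution $P$, $\mathcal Y$ the space of measurable functions on $\Xi$, $A\in\mathbb{R}^{n\times n}$, $q_1\in\mathbb{R}^n$, and $B:\mathbb{R}^l\to\mathbb{R}^{n\times m}$, $M:\mathbb{R}^l\to\mathbb{R}^{m\times m}$, $N:\mathbb{R}^l\to\mathbb{R}^{m\times n}$, $q_2:\mathbb{R}^l\to\mathbb{R}^m$ continuous. Suppose there is a positive continuous function $\kappa$ with $\mathbb{E}[\kappa(\xi)]<+\infty$ such that for almost every $\xi$, $\begin{pmatrix} z^T & u^T\end{pmatrix}\begin{pmatrix} A & B(\xi)\\ N(\xi) & M(\xi)\end{pmatrix}\begin{pmatrix} z\\ u\end{pmatrix}\ge\kappa(\xi)(\|z\|^2+\|u\|^2)$ for all $z,u$. Let $x^*$ be the first-stage component of the (unique) solution of the two-stage SLCP $$0\le x\perp Ax+\mathbb{E}[B(\xi)y(\xi)]+q_1\ge 0,\qquad 0\le y(\xi)\perp M(\xi)y(\xi)+N(\xi)x+q_2(\xi)\ge0\ \text{ for a.e. }\xi\in\Xi.$$ For $\epsilon>0$ let $\Xi_\epsilon\subset\Xi$ be a compact set such that, for every index selection $\xi\mapsto J(\xi)$, $$\Big\|\int_{\Xi\setminus\Xi_\epsilon}B(\xi)U_{J(\xi)}(M(\xi))N(\xi)P(d\xi)\Big\|\le\epsilon,\qquad \Big\|\int_{\Xi\setminus\Xi_\epsilon}B(\xi)U_{J(\xi)}(M(\xi))q_2(\xi)P(d\xi)\Big\|\le\epsilon,$$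 and consider the truncated problem $$0\le x\perp Ax+\mathbb{E}_{\Xi_\epsilon}[B(\xi)y(\xi)]+q_1\ge 0,\qquad 0\le y(\xi)\perp M(\xi)y(\xi)+N(\xi)x+q_2(\xi)\ge0\ \text{ for a.e. }\xi\in\Xi_\epsilon,$$ where $\mathbb{E}_{\Xi_\epsilon}[H(\xi)]:=\int_{\Xi_\epsilon}H(\xi)P(d\xi)$. Then there is $\epsilon_0>0$ such that for every $\epsilon\in(0,\epsilon_0]$ the truncated problem has a unique solution with first-stage component $x_\epsilon$, and there is a constant $C>0$ with $\|x^*-x_\epsilon\|\le C\epsilon$ for all $\epsilon\in(0,\epsilon_0]$.
   Context: For $J\subseteq\{1,\dots,m\}$, $D_J$ is the $m\times m$ diagonal 0/1 matrix with $(D_J)_{jj}=1$ iff $j\in J$, and for $M$ with $z^TMz>0$ for $z\ne0$, $U_J(M):=(I-D_J(I-M))^{-1}D_J$ (equal to $M_J^{-1}$ padded with zeros on the block indexed by $J$, and $0$ if $J=\emptyset$). $\|\cdot\|$ is the Euclidean / induced 2-norm. *)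

theory Defs
  imports "HOL-Probability.Probability"
begin

definition nonneg_vec :: "real^'k \<Rightarrow> bool" where
  "nonneg_vec v \<longleftrightarrow> (\<forall>i. 0 \<le> v $ i)"

definition mat_norm2 :: "real^'a^'b \<Rightarrow> real" where
  "mat_norm2 X = onorm (\<lambda>v. X *v v)"

definition diagJ :: "'m set \<Rightarrow> real^'m^'m" where
  "diagJ J = (\<chi> i j. if i = j \<and> i \<in> J then 1 else 0)"

definition UJ :: "'m set \<Rightarrow> real^'m^'m \<Rightarrow> real^'m^'m" where
  "UJ J X = matrix_inv (mat 1 - diagJ J ** (mat 1 - X)) ** diagJ J"

definition msupport :: "'a::topological_space measure \<Rightarrow> 'a set" where
  "msupport P = {x. \<forall>U. open U \<and> x \<in> U \<longrightarrow> emeasure P U > 0}"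

definition slcp_sol ::
  "'l::euclidean_space measure \<Rightarrow> 'l set \<Rightarrow> real^'n^'n \<Rightarrow> ('l \<Rightarrow> real^'m^'n) \<Rightarrow>
   ('l \<Rightarrow> real^'m^'m) \<Rightarrow> ('l \<Rightarrow> real^'n^'m) \<Rightarrow> real^'n \<Rightarrow> ('l \<Rightarrow> real^'m) \<Rightarrow>
   real^'n \<Rightarrow> ('l \<Rightarrow> real^'m) \<Rightarrow> bool" where
  "slcp_sol P S A B M N q1 q2 x y \<longleftrightarrow>
     y \<in> borel_measurable P \<and>
     set_integrable P S (\<lambda>\<xi>. B \<xi> *v y \<xi>) \<and>
     nonneg_vec x \<and>
     nonneg_vec (A *v x + (LINT \<xi>:S|P. B \<xi> *v y \<xi>) + q1) \<and>
     x \<bullet> (A *v x + (LINT \<xi>:S|P. B \<xi> *v y \<xi>) + q1) = 0 \<and>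
     (AE \<xi> in P. \<xi> \<in> S \<longrightarrow>
        nonneg_vec (y \<xi>) \<and>
        nonneg_vec (M \<xi> *v y \<xi> + N \<xi> *v x + q2 \<xi>) \<and>
        y \<xi> \<bullet> (M \<xi> *v y \<xi> + N \<xi> *v x + q2 \<xi>) = 0)"

end

theory Submission
  imports Defs
begin

text \<open>At every \<open>\<xi>\<close> in the support the matrix \<open>M(\<xi>)\<close> is coercive, so the second-stage LCP has a
  unique solution, continuous in \<open>\<xi>\<close> and Lipschitz in the first-stage decision \<open>x\<close>; with \<open>J\<close>
  its support, it equals \<open>-U\<^sub>J(M(\<xi>)) (N(\<xi>) x + q\<^sub>2(\<xi>))\<close>. Substituting it reduces the problem
  truncated to a compact \<open>S\<close> to a finite-dimensional LCP whose map
  \<open>x \<mapsto> A x + \<integral>\<^sub>S B y\<^sub>S(x) + q\<^sub>1\<close> is Lipschitz and strongly monotone with the constant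
  \<open>c = E[min(\<kappa>, c\<^sub>A)]\<close>, which does not depend on \<open>S\<close>; such an LCP is uniquely solvable because a
  projected gradient step is a contraction. Comparing with the untruncated solution, strong
  monotonicity gives \<open>c \<parallel>x\<^sup>* - x\<^sub>S\<parallel> \<le> \<parallel>\<integral>\<^bsub>\<Xi>-S\<^esub> B y\<^sup>*\<parallel>\<close>, and by the representation
  of \<open>y\<^sup>*\<close> through \<open>U\<^sub>J\<close> the two tail hypotheses bound this tail integral by \<open>\<epsilon> (\<parallel>x\<^sup>*\<parallel> + 1)\<close>.\<close>

section \<open>Linear complementarity problems\<close>

definition complementary :: "real^'k \<Rightarrow> real^'k \<Rightarrow> bool" where
  "complementary x f \<longleftrightarrow> nonneg_vec x \<and> nonneg_vec f \<and> x \<bullet> f = 0"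

lemma inner_nonneg_if_nonneg_vec: "nonneg_vec a \<Longrightarrow> nonneg_vec b \<Longrightarrow> 0 \<le> a \<bullet> (b::real^'k)"
  unfolding nonneg_vec_def inner_vec_def by (auto intro!: sum_nonneg)

lemma complementary_inner_diff_nonpos:
  assumes "complementary x f" "complementary x' f'"
  shows "(x - x') \<bullet> (f - f') \<le> 0"
proof -
  have "0 \<le> x \<bullet> f'" "0 \<le> x' \<bullet> f"
    using assms inner_nonneg_if_nonneg_vec unfolding complementary_def by blast+
  then show ?thesis
    using assms unfolding complementary_def by (simp add: inner_diff_left inner_diff_right)
qed

lemma complementary_nth:
  assumes "complementary x f"
  shows "x $ i = 0 \<or> f $ i = 0"
proof -
  have "(\<Sum>j\<in>UNIV. x $ j * f $ j) = 0" "\<forall>j\<in>UNIV. 0 \<le> x $ j * f $ j"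
    using assms unfolding complementary_def nonneg_vec_def inner_vec_def by auto
  then show ?thesis using sum_nonneg_eq_0_iff[of UNIV "\<lambda>j. x $ j * f $ j"] by auto
qed

lemma norm_le_if_sq_le_inner:
  fixes d r :: "'a::real_inner"
  assumes "k * (norm d)\<^sup>2 \<le> d \<bullet> r"
  shows "k * norm d \<le> norm r"
proof (cases "d = 0")
  case False
  have "norm d * (k * norm d) \<le> norm d * norm r"
    using assms norm_cauchy_schwarz[of d r] by (simp add: power2_eq_square algebra_simps)
  then show ?thesis using False by simp
qed simp

definition nonneg_part :: "real^'k \<Rightarrow> real^'k" where
  "nonneg_part v = (\<chi> i. max 0 (v $ i))"

lemma nonneg_part_nonexpansive: "norm (nonneg_part u - nonneg_part v) \<le> norm (u - v)"
  unfolding nonneg_part_def by (rule norm_le_componentwise_cart) (auto simp: abs_le_iff)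

lemma complementary_if_nonneg_part_fixpoint:
  assumes g: "0 < g" and fixed: "nonneg_part (x - g *\<^sub>R f) = x"
  shows "complementary x f"
proof -
  have c: "x $ i = max 0 (x $ i - g * f $ i)" for i
    using arg_cong[OF fixed, of "\<lambda>v. v $ i"] by (simp add: nonneg_part_def)
  have x_nonneg: "0 \<le> x $ i" for i using c[of i] by linarith
  have f_nonneg: "0 \<le> f $ i" and xf: "x $ i * f $ i = 0" for i
  proof -
    have "x $ i = 0 \<and> 0 \<le> g * f $ i \<or> g * f $ i = 0"
      using c[of i] by (auto simp: max_def split: if_splits)
    then show "0 \<le> f $ i" "x $ i * f $ i = 0"
      using g by (auto simp: zero_le_mult_iff)
  qed
  have "x \<bullet> f = 0" unfolding inner_vec_def by (simp add: xf)
  then show ?thesis unfolding complementary_def nonneg_vec_def using x_nonneg f_nonneg by auto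
qed

lemma projected_step_contraction:
  fixes F :: "real^'k \<Rightarrow> real^'k"
  assumes mon: "c * (norm (x - y))\<^sup>2 \<le> (x - y) \<bullet> (F x - F y)"
    and lip: "norm (F x - F y) \<le> L * norm (x - y)"
    and g: "0 < g" "g * L\<^sup>2 \<le> c"
  shows "(norm (nonneg_part (x - g *\<^sub>R F x) - nonneg_part (y - g *\<^sub>R F y)))\<^sup>2
           \<le> (1 - g * c) * (norm (x - y))\<^sup>2"
proof -
  define d e where "d = x - y" and "e = F x - F y"
  have "(norm (d - g *\<^sub>R e))\<^sup>2 = (d - g *\<^sub>R e) \<bullet> (d - g *\<^sub>R e)"
    by (rule power2_norm_eq_inner)
  also have "\<dots> = d \<bullet> d - 2 * g * (d \<bullet> e) + g\<^sup>2 * (e \<bullet> e)"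
    by (simp add: inner_diff_left inner_diff_right inner_commute[of e d]
        power2_eq_square algebra_simps)
  also have "\<dots> = (norm d)\<^sup>2 - 2 * g * (d \<bullet> e) + g\<^sup>2 * (norm e)\<^sup>2"
    by (simp add: power2_norm_eq_inner)
  also have "g\<^sup>2 * (norm e)\<^sup>2 \<le> g\<^sup>2 * (L * norm d)\<^sup>2"
    using lip by (intro mult_left_mono power_mono) (auto simp: d_def e_def)
  also have "\<dots> = g * (g * L\<^sup>2) * (norm d)\<^sup>2"
    by (simp add: power_mult_distrib power2_eq_square)
  also have "\<dots> \<le> g * c * (norm d)\<^sup>2"
    using g by (intro mult_right_mono mult_left_mono) auto
  finally have "(norm (d - g *\<^sub>R e))\<^sup>2 \<le> (norm d)\<^sup>2 - 2 * g * (d \<bullet> e) + g * c * (norm d)\<^sup>2"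
    by simp
  moreover have "g * (c * (norm d)\<^sup>2) \<le> g * (d \<bullet> e)"
    using mon g(1) by (intro mult_left_mono) (auto simp: d_def e_def)
  moreover have "(1 - g * c) * (norm d)\<^sup>2 = (norm d)\<^sup>2 - g * (c * (norm d)\<^sup>2)"
    "g * c * (norm d)\<^sup>2 = g * (c * (norm d)\<^sup>2)"
    by (simp_all add: algebra_simps)
  ultimately have step: "(norm (d - g *\<^sub>R e))\<^sup>2 \<le> (1 - g * c) * (norm d)\<^sup>2"
    by linarith
  have "(x - g *\<^sub>R F x) - (y - g *\<^sub>R F y) = d - g *\<^sub>R e"
    by (simp add: d_def e_def algebra_simps)
  then have "norm (nonneg_part (x - g *\<^sub>R F x) - nonneg_part (y - g *\<^sub>R F y)) \<le> norm (d - g *\<^sub>R e)"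
    by (metis nonneg_part_nonexpansive)
  from power_mono[OF this norm_ge_zero, of 2] step show ?thesis
    unfolding d_def by linarith
qed

lemma strongly_monotone_lcp_exists:
  fixes F :: "real^'k \<Rightarrow> real^'k"
  assumes c: "0 < c" and mon: "\<And>x y. c * (norm (x - y))\<^sup>2 \<le> (x - y) \<bullet> (F x - F y)"
    and lip: "\<And>x y. norm (F x - F y) \<le> L * norm (x - y)"
  shows "\<exists>x. complementary x (F x)"
proof -
  define g where "g = c / (L\<^sup>2 + 2 * c\<^sup>2)"
  have denom: "0 < L\<^sup>2 + 2 * c\<^sup>2" "c\<^sup>2 < L\<^sup>2 + 2 * c\<^sup>2"
    using c zero_le_power2[of L] zero_less_power2[of c] by linarith+
  have "c * L\<^sup>2 \<le> c * (L\<^sup>2 + 2 * c\<^sup>2)" using c by (intro mult_left_mono) auto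
  then have g: "0 < g" "0 < g * c" "g * L\<^sup>2 \<le> c" "g * c < 1"
    using c denom by (simp_all add: g_def field_simps power2_eq_square)
  define T where "T x = nonneg_part (x - g *\<^sub>R F x)" for x
  have "dist (T x) (T y) \<le> sqrt (1 - g * c) * dist x y" for x y
  proof -
    have "(norm (T x - T y))\<^sup>2 \<le> (sqrt (1 - g * c) * norm (x - y))\<^sup>2"
      using projected_step_contraction[OF mon[of x y] lip[of x y] g(1,3)] g(4)
      by (simp add: T_def power_mult_distrib)
    then show ?thesis
      unfolding dist_norm by (rule power2_le_imp_le) (use g(4) in simp)
  qed
  moreover have "sqrt (1 - g * c) < 1" using g(2,4) by simp
  ultimately obtain x where "T x = x"
    using banach_fix_type[of "sqrt (1 - g * c)" T] g(4) by auto
  then show ?thesis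
    using complementary_if_nonneg_part_fixpoint[OF g(1)] unfolding T_def by blast
qed

section \<open>LCPs with a coercive matrix\<close>

definition coercive :: "real \<Rightarrow> real^'m^'m \<Rightarrow> bool" where
  "coercive k X \<longleftrightarrow> (\<forall>u. k * (norm u)\<^sup>2 \<le> u \<bullet> (X *v u))"

definition mat_l1 :: "real^'a^'b \<Rightarrow> real" where
  "mat_l1 X = (\<Sum>i\<in>UNIV. \<Sum>j\<in>UNIV. \<bar>X $ i $ j\<bar>)"

lemma mat_l1_nonneg: "0 \<le> mat_l1 X"
  unfolding mat_l1_def by (intro sum_nonneg) auto

lemma norm_mult_vec_le_mat_norm2: "norm (X *v v) \<le> mat_norm2 X * norm v"
  unfolding mat_norm2_def using onorm[OF matrix_vector_mul_bounded_linear[of X]] by simp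

lemma norm_mult_vec_le_mat_l1: "norm (X *v v) \<le> mat_l1 X * norm (v::real^'a)"
  using norm_mult_vec_le_mat_norm2[of X v] onorm_le_matrix_component_sum[of X]
  unfolding mat_l1_def mat_norm2_def by (meson mult_right_mono norm_ge_zero order_trans)

lemma coercive_norm_le_if_nth:
  assumes "coercive k X" and "\<And>i. v $ i = 0 \<or> (X *v v) $ i = r $ i"
  shows "k * norm v \<le> norm r"
proof -
  have "v \<bullet> (X *v v) = v \<bullet> r"
    unfolding inner_vec_def by (intro sum.cong refl) (metis assms(2) inner_zero_left)
  then show ?thesis
    using assms(1) unfolding coercive_def by (metis norm_le_if_sq_le_inner)
qed

lemma lcp_perturbation:
  assumes "coercive k X1"
    and "complementary y (X1 *v y + w1)" "complementary y' (X2 *v y' + w2)"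
  shows "k * norm (y - y') \<le> mat_l1 (X1 - X2) * norm y' + norm (w1 - w2)"
proof -
  define r where "r = (X1 - X2) *v y' + (w1 - w2)"
  have "(X1 *v y + w1) - (X2 *v y' + w2) = X1 *v (y - y') + r"
    by (simp add: r_def matrix_vector_mult_diff_distrib matrix_vector_mult_diff_rdistrib
        algebra_simps)
  then have "(y - y') \<bullet> (X1 *v (y - y')) \<le> (y - y') \<bullet> - r"
    using complementary_inner_diff_nonpos[OF assms(2,3)] by (simp add: inner_add_right)
  then have "k * norm (y - y') \<le> norm (- r)"
    using assms(1) unfolding coercive_def by (meson norm_le_if_sq_le_inner order_trans)
  also have "\<dots> \<le> mat_l1 (X1 - X2) * norm y' + norm (w1 - w2)"
    using norm_mult_vec_le_mat_l1[of "X1 - X2" y']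
      norm_triangle_ineq[of "(X1 - X2) *v y'" "w1 - w2"]
    unfolding r_def norm_minus_cancel by linarith
  finally show ?thesis .
qed

lemma lcp_norm_le:
  assumes "coercive k X" and "complementary y (X *v y + w)"
  shows "k * norm y \<le> norm w"
proof -
  have "complementary 0 (X *v 0 + 0)"
    by (simp add: complementary_def nonneg_vec_def)
  from lcp_perturbation[OF assms this] show ?thesis by (simp add: mat_l1_def)
qed

lemma coercive_lcp_exists_unique:
  assumes k: "0 < k" and X: "coercive k X"
  shows "\<exists>!y. complementary y (X *v y + w)"
proof -
  have mon: "k * (norm (x - y))\<^sup>2 \<le> (x - y) \<bullet> ((X *v x + w) - (X *v y + w))" for x y
    using X unfolding coercive_def by (simp add: matrix_vector_mult_diff_distrib[symmetric])
  have lip: "norm ((X *v x + w) - (X *v y + w)) \<le> mat_l1 X * norm (x - y)" for x y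
    using norm_mult_vec_le_mat_l1[of X "x - y"] by (simp add: matrix_vector_mult_diff_distrib)
  have "y1 = y2" if "complementary y1 (X *v y1 + w)" "complementary y2 (X *v y2 + w)" for y1 y2
    using lcp_perturbation[OF X that] k by (simp add: mat_l1_def mult_le_0_iff)
  then show ?thesis
    using strongly_monotone_lcp_exists[where F = "\<lambda>y. X *v y + w", OF k mon lip] by blast
qed

definition lcp_solution :: "real^'m^'m \<Rightarrow> real^'m \<Rightarrow> real^'m" where
  "lcp_solution X w = (THE y. complementary y (X *v y + w))"

lemma lcp_solution:
  "0 < k \<Longrightarrow> coercive k X \<Longrightarrow> complementary (lcp_solution X w) (X *v lcp_solution X w + w)"
  unfolding lcp_solution_def by (rule theI') (rule coercive_lcp_exists_unique)

lemma lcp_solution_unique: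
  "0 < k \<Longrightarrow> coercive k X \<Longrightarrow> complementary y (X *v y + w) \<Longrightarrow> y = lcp_solution X w"
  using coercive_lcp_exists_unique lcp_solution by blast

section \<open>The matrices \<open>U\<^sub>J\<close>\<close>

definition mixed_rows :: "'m set \<Rightarrow> real^'m^'m \<Rightarrow> real^'m^'m" where
  "mixed_rows J X = mat 1 - diagJ J ** (mat 1 - X)"

lemma diagJ_mult_vec_nth: "(diagJ J *v v) $ i = (if i \<in> J then v $ i else 0)"
proof -
  have "(diagJ J *v v) $ i = (\<Sum>j\<in>UNIV. (if i = j \<and> i \<in> J then 1 else 0) * v $ j)"
    by (simp add: matrix_vector_mult_def diagJ_def)
  also have "\<dots> = (\<Sum>j\<in>UNIV. if j = i then (if i \<in> J then v $ i else 0) else 0)"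
    by (intro sum.cong) auto
  finally show ?thesis by simp
qed

lemma mixed_rows_mult_vec_nth:
  "(mixed_rows J X *v v) $ i = (if i \<in> J then (X *v v) $ i else v $ i)"
proof -
  have "mixed_rows J X *v v = v - diagJ J *v (v - X *v v)"
    by (simp add: mixed_rows_def matrix_vector_mult_diff_rdistrib matrix_vector_mul_assoc[symmetric]
        matrix_vector_mult_diff_distrib)
  then show ?thesis by (simp add: diagJ_mult_vec_nth)
qed

lemma mixed_rows_invertible:
  assumes "0 < k" "coercive k X"
  shows "invertible (mixed_rows J X)"
proof -
  have "v = 0" if "mixed_rows J X *v v = 0" for v
  proof -
    have "v $ i = 0 \<or> (X *v v) $ i = 0 $ i" for i
      using arg_cong[OF that, of "\<lambda>v. v $ i"]
      by (auto simp: mixed_rows_mult_vec_nth split: if_splits)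
    then show ?thesis using coercive_norm_le_if_nth[OF assms(2)] assms(1)
      by (metis mult_le_0_iff norm_le_zero_iff norm_zero not_less)
  qed
  then have "inj ((*v) (mixed_rows J X))"
    by (metis (no_types, lifting) eq_iff_diff_eq_0 injI matrix_vector_mult_diff_distrib)
  then show ?thesis
    using matrix_left_invertible_injective invertible_left_inverse by blast
qed

lemma invertible_mult_matrix_inv:
  assumes "invertible (X::real^'m^'m)"
  shows "X ** matrix_inv X = mat 1"
proof -
  have "\<exists>X'. X ** X' = mat 1 \<and> X' ** X = mat 1" using assms unfolding invertible_def by blast
  then show ?thesis unfolding matrix_inv_def by (rule someI2_ex) blast
qed

lemma UJ_mult_vec_nth:
  assumes "0 < k" "coercive k X"
  shows "i \<notin> J \<Longrightarrow> (UJ J X *v w) $ i = 0"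
    and "i \<in> J \<Longrightarrow> (X *v (UJ J X *v w)) $ i = w $ i"
proof -
  have "mixed_rows J X ** matrix_inv (mixed_rows J X) = mat 1"
    using invertible_mult_matrix_inv[OF mixed_rows_invertible[OF assms]] .
  then have "mixed_rows J X *v (UJ J X *v w) = diagJ J *v w"
    by (metis UJ_def matrix_vector_mul_assoc matrix_vector_mul_lid mixed_rows_def)
  from arg_cong[OF this, of "\<lambda>v. v $ i"]
  show "i \<notin> J \<Longrightarrow> (UJ J X *v w) $ i = 0" "i \<in> J \<Longrightarrow> (X *v (UJ J X *v w)) $ i = w $ i"
    by (auto simp: mixed_rows_mult_vec_nth diagJ_mult_vec_nth)
qed

lemma UJ_empty [simp]: "UJ {} X = 0"
  by (simp add: UJ_def diagJ_def matrix_matrix_mult_def vec_eq_iff)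

lemma UJ_norm_le:
  assumes "0 < k" "coercive k X"
  shows "k * norm (UJ J X *v w) \<le> norm w"
  by (rule coercive_norm_le_if_nth[OF assms(2)]) (metis UJ_mult_vec_nth[OF assms])

lemma UJ_perturbation:
  assumes "0 < k1" "coercive k1 X1" "0 < k2" "coercive k2 X2"
  shows "k1 * norm (UJ J X1 *v w - UJ J X2 *v w) \<le> mat_l1 (X1 - X2) * norm (UJ J X2 *v w)"
proof -
  define v1 v2 where "v1 = UJ J X1 *v w" and "v2 = UJ J X2 *v w"
  have "(v1 - v2) $ i = 0 \<or> (X1 *v (v1 - v2)) $ i = (- ((X1 - X2) *v v2)) $ i" for i
    using UJ_mult_vec_nth[OF assms(1,2), of i J w] UJ_mult_vec_nth[OF assms(3,4), of i J w]
    by (cases "i \<in> J") (auto simp: v1_def v2_def matrix_vector_mult_diff_distrib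
        matrix_vector_mult_diff_rdistrib)
  then have "k1 * norm (v1 - v2) \<le> norm ((X1 - X2) *v v2)"
    using coercive_norm_le_if_nth[OF assms(2)] by (metis norm_minus_cancel)
  then show ?thesis
    using norm_mult_vec_le_mat_l1[of "X1 - X2" v2] unfolding v1_def v2_def by linarith
qed

text \<open>Both \<open>y\<close> and \<open>-U\<^sub>J(X) w\<close> vanish off \<open>J\<close> and make \<open>X y + w\<close> vanish on \<open>J\<close>; coercivity
  separates two such vectors.\<close>
lemma lcp_eq_neg_UJ:
  assumes k: "0 < k" "coercive k X" and y: "complementary y (X *v y + w)"
  shows "y = - (UJ {i. 0 < y $ i} X *v w)"
proof -
  define J u where "J = {i. 0 < y $ i}" and "u = UJ J X *v w"
  have "(y + u) $ i = 0 \<or> (X *v (y + u)) $ i = 0 $ i" for i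
  proof (cases "i \<in> J")
    case True
    then have "(X *v y + w) $ i = 0" using complementary_nth[OF y, of i] by (simp add: J_def)
    then show ?thesis
      using UJ_mult_vec_nth(2)[OF k True] by (simp add: u_def matrix_vector_right_distrib)
  next
    case False
    then have "y $ i = 0"
      using y unfolding J_def complementary_def nonneg_vec_def
      by (metis mem_Collect_eq order_le_less)
    then show ?thesis using UJ_mult_vec_nth(1)[OF k False] by (simp add: u_def)
  qed
  then have "k * norm (y + u) \<le> 0" using coercive_norm_le_if_nth[OF k(2)] by (metis norm_zero)
  then have "y + u = 0" using k(1) by (simp add: mult_le_0_iff)
  then show ?thesis by (simp add: J_def u_def eq_neg_iff_add_eq_0)
qed

section \<open>Continuity, measurability and integrals\<close>

lemma continuous_on_mult_vec [continuous_intros]: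
  "continuous_on S X \<Longrightarrow> continuous_on S v \<Longrightarrow> continuous_on S (\<lambda>\<xi>. X \<xi> *v (v \<xi>::real^'a))"
  unfolding matrix_vector_mult_def by (intro continuous_intros)

lemma continuous_on_mult_mat [continuous_intros]:
  "continuous_on S X \<Longrightarrow> continuous_on S Y \<Longrightarrow> continuous_on S (\<lambda>\<xi>. X \<xi> ** (Y \<xi>::real^'c^'a))"
  unfolding matrix_matrix_mult_def by (intro continuous_intros)

lemma continuous_on_if_perturbation_bound:
  fixes f :: "'a::topological_space \<Rightarrow> real^'m" and X :: "'a \<Rightarrow> real^'m^'m"
    and w :: "'a \<Rightarrow> 'b::real_normed_vector"
  assumes X: "continuous_on S X" and w: "continuous_on S w" and k: "continuous_on S k"
    and k_pos: "\<And>\<xi>. \<xi> \<in> S \<Longrightarrow> 0 < k \<xi>"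
    and bound: "\<And>\<xi>. \<xi> \<in> S \<Longrightarrow> k \<xi> * norm (f \<xi>) \<le> norm (w \<xi>)"
    and perturb: "\<And>\<xi> \<xi>0. \<xi> \<in> S \<Longrightarrow> \<xi>0 \<in> S \<Longrightarrow>
      k \<xi>0 * norm (f \<xi>0 - f \<xi>) \<le> mat_l1 (X \<xi>0 - X \<xi>) * norm (f \<xi>) + norm (w \<xi>0 - w \<xi>)"
  shows "continuous_on S f"
  unfolding continuous_on_def
proof
  fix \<xi>0 assume \<xi>0: "\<xi>0 \<in> S"
  define g where "g \<xi> = (mat_l1 (X \<xi>0 - X \<xi>) * (norm (w \<xi>) / k \<xi>) + norm (w \<xi>0 - w \<xi>)) / k \<xi>0" for \<xi>
  have "(X \<longlongrightarrow> X \<xi>0) (at \<xi>0 within S)" "(w \<longlongrightarrow> w \<xi>0) (at \<xi>0 within S)"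
    "(k \<longlongrightarrow> k \<xi>0) (at \<xi>0 within S)"
    using X w k \<xi>0 unfolding continuous_on_def by blast+
  then have "(g \<longlongrightarrow> (mat_l1 (X \<xi>0 - X \<xi>0) * (norm (w \<xi>0) / k \<xi>0) + norm (w \<xi>0 - w \<xi>0)) / k \<xi>0)
      (at \<xi>0 within S)"
    unfolding g_def mat_l1_def by (intro tendsto_intros) (use k_pos[OF \<xi>0] in auto)
  then have g: "(g \<longlongrightarrow> 0) (at \<xi>0 within S)" by (simp add: mat_l1_def)
  have "norm (f \<xi> - f \<xi>0) \<le> g \<xi>" if \<xi>: "\<xi> \<in> S" for \<xi>
  proof -
    have "norm (f \<xi>) \<le> norm (w \<xi>) / k \<xi>"
      using bound[OF \<xi>] k_pos[OF \<xi>] by (simp add: pos_le_divide_eq mult.commute)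
    then have "k \<xi>0 * norm (f \<xi>0 - f \<xi>)
        \<le> mat_l1 (X \<xi>0 - X \<xi>) * (norm (w \<xi>) / k \<xi>) + norm (w \<xi>0 - w \<xi>)"
      using perturb[OF \<xi> \<xi>0] mult_left_mono[OF _ mat_l1_nonneg] by (smt (verit))
    then show ?thesis
      using k_pos[OF \<xi>0] by (simp add: g_def pos_le_divide_eq mult.commute norm_minus_commute)
  qed
  then have "eventually (\<lambda>\<xi>. norm (f \<xi> - f \<xi>0) \<le> g \<xi>) (at \<xi>0 within S)"
    by (auto simp: eventually_at_filter)
  then have "((\<lambda>\<xi>. f \<xi> - f \<xi>0) \<longlongrightarrow> 0) (at \<xi>0 within S)"
    using g by (rule Lim_null_comparison)
  then show "(f \<longlongrightarrow> f \<xi>0) (at \<xi>0 within S)" by (simp add: Lim_null[symmetric])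
qed

lemma continuous_on_lcp_solution:
  assumes "continuous_on S X" "continuous_on S w" "continuous_on S k"
    and "\<And>\<xi>. \<xi> \<in> S \<Longrightarrow> 0 < k \<xi> \<and> coercive (k \<xi>) (X \<xi>)"
  shows "continuous_on S (\<lambda>\<xi>. lcp_solution (X \<xi>) (w \<xi>))"
  using assms(1-3)
proof (rule continuous_on_if_perturbation_bound)
  fix \<xi> \<xi>0 assume "\<xi> \<in> S" "\<xi>0 \<in> S"
  with assms(4) show "0 < k \<xi>" "k \<xi> * norm (lcp_solution (X \<xi>) (w \<xi>)) \<le> norm (w \<xi>)"
    "k \<xi>0 * norm (lcp_solution (X \<xi>0) (w \<xi>0) - lcp_solution (X \<xi>) (w \<xi>))
      \<le> mat_l1 (X \<xi>0 - X \<xi>) * norm (lcp_solution (X \<xi>) (w \<xi>)) + norm (w \<xi>0 - w \<xi>)"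
    by (blast intro: lcp_norm_le lcp_perturbation lcp_solution)+
qed

lemma continuous_on_UJ:
  fixes X :: "'a::topological_space \<Rightarrow> real^'m^'m"
  assumes "continuous_on S X" "continuous_on S k"
    and "\<And>\<xi>. \<xi> \<in> S \<Longrightarrow> 0 < k \<xi> \<and> coercive (k \<xi>) (X \<xi>)"
  shows "continuous_on S (\<lambda>\<xi>. UJ J (X \<xi>))"
proof -
  have "continuous_on S (\<lambda>\<xi>. UJ J (X \<xi>) *v e)" for e :: "real^'m"
    using assms(1) continuous_on_const assms(2)
  proof (rule continuous_on_if_perturbation_bound)
    fix \<xi> \<xi>0 assume "\<xi> \<in> S" "\<xi>0 \<in> S"
    with assms(3) show "0 < k \<xi>" "k \<xi> * norm (UJ J (X \<xi>) *v e) \<le> norm e"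
      "k \<xi>0 * norm (UJ J (X \<xi>0) *v e - UJ J (X \<xi>) *v e)
        \<le> mat_l1 (X \<xi>0 - X \<xi>) * norm (UJ J (X \<xi>) *v e) + norm (e - e)"
      by (auto intro: UJ_norm_le UJ_perturbation)
  qed
  then have "continuous_on S (\<lambda>\<xi>. \<chi> i j. (UJ J (X \<xi>) *v axis j 1) $ i)"
    by (intro continuous_on_vec_lambda continuous_on_component)
  moreover have "(\<chi> i j. (Y *v axis j 1) $ i) = Y" for Y :: "real^'m^'m"
    by (simp add: vec_eq_iff matrix_vector_mult_def axis_def if_distrib cong: if_cong)
  ultimately show ?thesis by simp
qed

lemma closed_msupport: "closed (msupport P)"
  unfolding closed_def open_subopen[of "- msupport P"]
proof
  fix x assume "x \<in> - msupport P"
  then obtain U where "open U" "x \<in> U" "\<not> emeasure P U > 0" unfolding msupport_def by blast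
  moreover then have "U \<subseteq> - msupport P" unfolding msupport_def by blast
  ultimately show "\<exists>T. open T \<and> x \<in> T \<and> T \<subseteq> - msupport P" by blast
qed

lemma measurable_positive_indices:
  fixes y :: "'a \<Rightarrow> real^'m"
  assumes y: "y \<in> borel_measurable M"
  shows "(\<lambda>\<xi>. {j. 0 < y \<xi> $ j}) \<in> measurable M (count_space UNIV)"
  unfolding measurable_count_space_eq2_countable
proof (intro conjI ballI)
  fix J :: "'m set"
  have [measurable]: "(\<lambda>\<xi>. y \<xi> $ j) \<in> borel_measurable M" for j
    using measurable_compose[OF y borel_measurable_nth] .
  have "(\<lambda>\<xi>. {j. 0 < y \<xi> $ j}) -` {J} \<inter> space M = {\<xi> \<in> space M. \<forall>j. (0 < y \<xi> $ j) = (j \<in> J)}"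
    by auto
  also have "\<dots> \<in> sets M" by measurable
  finally show "(\<lambda>\<xi>. {j. 0 < y \<xi> $ j}) -` {J} \<inter> space M \<in> sets M" .
qed auto

lemma bounded_linear_mult_vec_left: "bounded_linear (\<lambda>X::real^'n^'m. X *v x)"
  by (auto intro!: linearI simp: linear_conv_bounded_linear[symmetric]
      matrix_vector_mult_add_rdistrib scaleR_matrix_vector_assoc)

lemma borel_measurable_mult_vec [measurable]:
  fixes F :: "'a \<Rightarrow> real^'n^'m"
  assumes "F \<in> borel_measurable M"
  shows "(\<lambda>\<xi>. F \<xi> *v x) \<in> borel_measurable M"
  using measurable_compose[OF assms borel_measurable_continuous_onI]
    linear_continuous_on[OF bounded_linear_mult_vec_left] by blast

lemma set_integral_mult_vec:
  fixes F :: "'a \<Rightarrow> real^'n^'m"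
  assumes "set_integrable M E F"
  shows "set_integrable M E (\<lambda>\<xi>. F \<xi> *v x)" "(LINT \<xi>:E|M. F \<xi> *v x) = (LINT \<xi>:E|M. F \<xi>) *v x"
  using integrable_bounded_linear[OF bounded_linear_mult_vec_left]
    integral_bounded_linear[OF bounded_linear_mult_vec_left] assms
  unfolding set_integrable_def set_lebesgue_integral_def
  by (simp_all add: scaleR_matrix_vector_assoc)

lemma set_integral_inner_right:
  assumes "set_integrable M S f"
  shows "set_integrable M S (\<lambda>\<xi>. z \<bullet> f \<xi>)" "(LINT \<xi>:S|M. z \<bullet> f \<xi>) = z \<bullet> (LINT \<xi>:S|M. f \<xi>)"
  using assms unfolding set_integrable_def set_lebesgue_integral_def
  by (simp_all add: inner_scaleR_right[symmetric] del: inner_scaleR_right)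

text \<open>Only the integrals of \<open>F\<close> and \<open>G\<close> over subsets of \<open>T\<close> are controlled, and these need not
  exist over \<open>T\<close> itself; hence we exhaust \<open>T\<close> by the sets where \<open>F\<close> and \<open>G\<close> are bounded.\<close>
lemma (in finite_measure) norm_set_integral_affine_le:
  fixes F :: "'a \<Rightarrow> real^'n^'m" and G h :: "'a \<Rightarrow> real^'m"
  assumes T[measurable]: "T \<in> sets M" and h: "set_integrable M T h"
    and [measurable]: "F \<in> borel_measurable M" "G \<in> borel_measurable M"
    and h_eq: "AE \<xi> in M. \<xi> \<in> T \<longrightarrow> h \<xi> = - (F \<xi> *v x + G \<xi>)"
    and F_le: "\<And>E. E \<in> sets M \<Longrightarrow> E \<subseteq> T \<Longrightarrow> mat_norm2 (LINT \<xi>:E|M. F \<xi>) \<le> \<epsilon>"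
    and G_le: "\<And>E. E \<in> sets M \<Longrightarrow> E \<subseteq> T \<Longrightarrow> norm (LINT \<xi>:E|M. G \<xi>) \<le> \<epsilon>"
  shows "norm (LINT \<xi>:T|M. h \<xi>) \<le> \<epsilon> * (norm x + 1)"
proof -
  define E where "E k = {\<xi> \<in> space M. \<xi> \<in> T \<and> norm (F \<xi>) \<le> real k \<and> norm (G \<xi>) \<le> real k}"
    for k :: nat
  have E[measurable]: "E k \<in> sets M" for k unfolding E_def by measurable
  have E_sub: "E k \<subseteq> T" for k unfolding E_def by auto
  have inc: "incseq E" unfolding incseq_def E_def by (auto intro: order_trans)
  have union: "(\<Union>k. E k) = T"
  proof (intro antisym subsetI)
    fix \<xi> assume \<xi>: "\<xi> \<in> T"
    obtain k :: nat where "max (norm (F \<xi>)) (norm (G \<xi>)) \<le> real k" using real_arch_simple by blast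
    then show "\<xi> \<in> (\<Union>k. E k)" using \<xi> sets.sets_into_space[OF T] by (auto simp: E_def)
  qed (use E_sub in blast)
  have lim: "(\<lambda>k. LINT \<xi>:E k|M. h \<xi>) \<longlonglongrightarrow> (LINT \<xi>:T|M. h \<xi>)"
    using set_integral_cont_up[OF E inc, where f = h] h unfolding union by simp
  have "norm (LINT \<xi>:E k|M. h \<xi>) \<le> \<epsilon> * (norm x + 1)" for k
  proof -
    have iF: "set_integrable M (E k) F" and iG: "set_integrable M (E k) G"
      unfolding set_integrable_def
      by (rule integrable_const_bound[where B = "real k"]; auto simp: E_def indicator_def)+
    have iFG: "set_integrable M (E k) (\<lambda>\<xi>. F \<xi> *v x + G \<xi>)"
      using set_integral_mult_vec(1)[OF iF] iG by (rule set_integral_add(1))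
    have "(\<lambda>\<xi>. indicator (E k) \<xi> *\<^sub>R h \<xi>) \<in> borel_measurable M"
      using set_integrable_subset[OF h E E_sub] unfolding set_integrable_def by measurable
    moreover have "AE \<xi> in M. indicator (E k) \<xi> *\<^sub>R h \<xi> = indicator (E k) \<xi> *\<^sub>R - (F \<xi> *v x + G \<xi>)"
      using h_eq by eventually_elim (use E_sub[of k] in \<open>auto simp: indicator_def\<close>)
    ultimately have "(LINT \<xi>:E k|M. h \<xi>) = (LINT \<xi>:E k|M. - (F \<xi> *v x + G \<xi>))"
      unfolding set_lebesgue_integral_def by (intro integral_cong_AE) auto
    also have "\<dots> = - ((LINT \<xi>:E k|M. F \<xi>) *v x) - (LINT \<xi>:E k|M. G \<xi>)"
      using set_integral_uminus[OF iFG] set_integral_add(2)[OF set_integral_mult_vec(1)[OF iF] iG]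
        set_integral_mult_vec(2)[OF iF] by simp
    also have "norm \<dots> \<le> mat_norm2 (LINT \<xi>:E k|M. F \<xi>) * norm x + norm (LINT \<xi>:E k|M. G \<xi>)"
      using norm_triangle_ineq4 norm_mult_vec_le_mat_norm2 by (smt (verit) norm_minus_cancel)
    also have "\<dots> \<le> \<epsilon> * norm x + \<epsilon>"
      using F_le[OF E E_sub] G_le[OF E E_sub] by (intro add_mono mult_right_mono) auto
    finally show ?thesis by (simp add: algebra_simps)
  qed
  then show ?thesis using LIMSEQ_le_const2[OF tendsto_norm[OF lim]] by blast
qed

section \<open>The two-stage problem\<close>

locale two_stage_slcp = prob_space P
  for P :: "(real^'l) measure"
    and A :: "real^'n^'n" and q1 :: "real^'n"
    and B :: "real^'l \<Rightarrow> real^'m^'n"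
    and M :: "real^'l \<Rightarrow> real^'m^'m"
    and N :: "real^'l \<Rightarrow> real^'n^'m"
    and q2 :: "real^'l \<Rightarrow> real^'m"
    and \<kappa> :: "real^'l \<Rightarrow> real" +
  assumes sets_P: "sets P = sets borel"
    and contB: "continuous_on UNIV B" and contM: "continuous_on UNIV M"
    and contN: "continuous_on UNIV N" and contq2: "continuous_on UNIV q2"
    and kappa_cont: "continuous_on UNIV \<kappa>"
    and kappa_pos: "\<And>\<xi>. \<kappa> \<xi> > 0"
    and kappa_int: "integrable P \<kappa>"
    and mono: "AE \<xi> in P. \<forall>z u.
        z \<bullet> (A *v z + B \<xi> *v u) + u \<bullet> (N \<xi> *v z + M \<xi> *v u)
          \<ge> \<kappa> \<xi> * (norm z ^ 2 + norm u ^ 2)"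
begin

lemma space_P: "space P = UNIV"
  using sets_eq_imp_space_eq[OF sets_P] by simp

lemma borel_measurable_P_iff: "f \<in> borel_measurable P \<longleftrightarrow> f \<in> borel_measurable borel"
  by (simp add: measurable_cong_sets[OF sets_P refl])

lemma msupport_in_sets: "msupport P \<in> sets P"
  using borel_closed[OF closed_msupport] by (simp add: sets_P)

definition block_coercive :: "real^'l \<Rightarrow> bool" where
  "block_coercive \<xi> \<longleftrightarrow> (\<forall>z u. z \<bullet> (A *v z + B \<xi> *v u) + u \<bullet> (N \<xi> *v z + M \<xi> *v u)
     \<ge> \<kappa> \<xi> * (norm z ^ 2 + norm u ^ 2))"

text \<open>A closed set of full measure contains the support.\<close>
lemma block_coercive_on_msupport:
  assumes "\<xi> \<in> msupport P"
  shows "block_coercive \<xi>"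
proof (rule ccontr)
  assume "\<not> block_coercive \<xi>"
  have "closed {\<xi>. block_coercive \<xi>}"
    unfolding block_coercive_def
    by (intro closed_Collect_all closed_Collect_le continuous_intros contB contM contN kappa_cont)
  then have "open (- {\<xi>. block_coercive \<xi>})" "- {\<xi>. block_coercive \<xi>} \<in> sets P"
    by (auto simp: sets_P)
  moreover have "AE \<xi> in P. block_coercive \<xi>" using mono unfolding block_coercive_def .
  ultimately have "emeasure P (- {\<xi>. block_coercive \<xi>}) = 0"
    by (simp add: AE_iff_measurable space_P Compl_eq)
  with \<open>open _\<close> \<open>\<not> block_coercive \<xi>\<close> assms show False unfolding msupport_def by auto
qed

lemma coercive_M:
  assumes "\<xi> \<in> msupport P"
  shows "coercive (\<kappa> \<xi>) (M \<xi>)"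
proof -
  have "\<kappa> \<xi> * ((norm (0::real^'n))\<^sup>2 + (norm u)\<^sup>2)
      \<le> 0 \<bullet> (A *v 0 + B \<xi> *v u) + u \<bullet> (N \<xi> *v 0 + M \<xi> *v u)"
    for u using block_coercive_on_msupport[OF assms] unfolding block_coercive_def by blast
  then show ?thesis unfolding coercive_def by simp
qed

lemma ex_coercive_A: "\<exists>c>0. coercive c A"
proof -
  have "AE \<xi> in P. block_coercive \<xi>" using mono unfolding block_coercive_def .
  have "\<exists>\<xi>. block_coercive \<xi>"
  proof (rule ccontr)
    assume "\<nexists>\<xi>. block_coercive \<xi>"
    with \<open>AE \<xi> in P. block_coercive \<xi>\<close> show False by (simp add: AE_False)
  qed
  then obtain \<xi> where \<xi>: "block_coercive \<xi>" ..
  have "\<kappa> \<xi> * ((norm z)\<^sup>2 + (norm (0::real^'m))\<^sup>2)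
      \<le> z \<bullet> (A *v z + B \<xi> *v 0) + 0 \<bullet> (N \<xi> *v z + M \<xi> *v 0)"
    for z using \<xi> unfolding block_coercive_def by blast
  then have "coercive (\<kappa> \<xi>) A" unfolding coercive_def by simp
  then show ?thesis using kappa_pos by blast
qed

definition coercivity_A :: real where
  "coercivity_A = (SOME c. 0 < c \<and> coercive c A)"

lemma coercivity_A: "0 < coercivity_A" "coercive coercivity_A A"
  using someI_ex[OF ex_coercive_A] unfolding coercivity_A_def by auto

text \<open>Strong monotonicity constant of the first stage, uniform in the truncation set \<open>S\<close>: the
  integrand is at most \<open>\<kappa>\<close> on \<open>S\<close> and at most the coercivity constant of \<open>A\<close> off \<open>S\<close>.\<close>
definition coercivity :: real where
  "coercivity = (LINT \<xi>|P. min (\<kappa> \<xi>) coercivity_A)"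

lemma kappa_measurable [measurable]: "\<kappa> \<in> borel_measurable P"
  using borel_measurable_continuous_onI[OF kappa_cont] by (simp add: borel_measurable_P_iff)

lemma integrable_min_kappa: "integrable P (\<lambda>\<xi>. min (\<kappa> \<xi>) coercivity_A)"
  by (rule integrable_const_bound[where B = coercivity_A])
    (use kappa_pos coercivity_A(1) in \<open>auto intro!: AE_I2 simp: abs_le_iff less_imp_le\<close>)

lemma coercivity_pos: "0 < coercivity"
proof -
  have pos: "0 < min (\<kappa> \<xi>) coercivity_A" for \<xi> using kappa_pos[of \<xi>] coercivity_A(1) by simp
  then have nonneg: "AE \<xi> in P. 0 \<le> min (\<kappa> \<xi>) coercivity_A" by (simp add: less_imp_le)
  have "\<not> (AE \<xi> in P. min (\<kappa> \<xi>) coercivity_A = 0)"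
    using pos by (simp add: AE_False order_less_imp_not_eq2)
  then have "coercivity \<noteq> 0"
    using integral_nonneg_eq_0_iff_AE[OF integrable_min_kappa nonneg]
    unfolding coercivity_def by simp
  moreover have "0 \<le> coercivity" unfolding coercivity_def using nonneg by (rule integral_nonneg_AE)
  ultimately show ?thesis by simp
qed

lemma coercivity_le:
  assumes S: "S \<in> sets P"
  shows "coercivity \<le> (1 - measure P S) * coercivity_A + (LINT \<xi>:S|P. \<kappa> \<xi>)"
proof -
  have iS: "integrable P (\<lambda>\<xi>. indicator S \<xi> * \<kappa> \<xi>)"
    using integrable_real_mult_indicator[OF S kappa_int] by (simp add: mult.commute)
  have iC: "integrable P (\<lambda>\<xi>. indicator (space P - S) \<xi> * coercivity_A)"
    using integrable_real_mult_indicator[of "space P - S" P "\<lambda>_. coercivity_A"] S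
    by (simp add: mult.commute)
  have "coercivity \<le> (LINT \<xi>|P. indicator S \<xi> * \<kappa> \<xi> + indicator (space P - S) \<xi> * coercivity_A)"
    unfolding coercivity_def using integrable_min_kappa Bochner_Integration.integrable_add[OF iS iC]
    by (rule integral_mono) (auto simp: space_P indicator_def)
  also have "\<dots> = (LINT \<xi>:S|P. \<kappa> \<xi>) + measure P (space P - S) * coercivity_A"
    using iS iC by (simp add: set_lebesgue_integral_def Int_absorb2)
  also have "measure P (space P - S) = 1 - measure P S" using prob_compl[OF S] .
  finally show ?thesis by simp
qed

lemma set_integrable_continuous_on_compact:
  fixes f :: "real^'l \<Rightarrow> 'b::{banach, second_countable_topology}"
  assumes S: "compact S" and f: "continuous_on S f"
  shows "set_integrable P S f"
proof -
  obtain K where K: "\<And>\<xi>. \<xi> \<in> S \<Longrightarrow> norm (f \<xi>) \<le> K"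
    using compact_imp_bounded[OF compact_continuous_image[OF f S]] by (auto simp: bounded_iff)
  have "(\<lambda>\<xi>. indicator S \<xi> *\<^sub>R f \<xi>) \<in> borel_measurable P"
    using borel_measurable_continuous_on_indicator[OF borel_compact[OF S] f]
    by (simp add: borel_measurable_P_iff)
  then show ?thesis
    unfolding set_integrable_def
    by (rule integrable_const_bound[where B = "max K 0", rotated])
      (auto simp: K indicator_def le_max_iff_disj)
qed

lemma second_stage_inner_bound:
  assumes "\<xi> \<in> msupport P"
    and "complementary y1 (M \<xi> *v y1 + (N \<xi> *v x1 + q2 \<xi>))"
    and "complementary y2 (M \<xi> *v y2 + (N \<xi> *v x2 + q2 \<xi>))"
  shows "\<kappa> \<xi> * (norm (x1 - x2))\<^sup>2 - (x1 - x2) \<bullet> (A *v (x1 - x2))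
    \<le> (x1 - x2) \<bullet> (B \<xi> *v y1 - B \<xi> *v y2)"
proof -
  define z u where "z = x1 - x2" and "u = y1 - y2"
  have "(M \<xi> *v y1 + (N \<xi> *v x1 + q2 \<xi>)) - (M \<xi> *v y2 + (N \<xi> *v x2 + q2 \<xi>)) = N \<xi> *v z + M \<xi> *v u"
    by (simp add: u_def z_def matrix_vector_mult_diff_distrib algebra_simps)
  then have "u \<bullet> (N \<xi> *v z + M \<xi> *v u) \<le> 0"
    using complementary_inner_diff_nonpos[OF assms(2,3)] by (simp add: u_def)
  moreover have "\<kappa> \<xi> * ((norm z)\<^sup>2 + (norm u)\<^sup>2)
      \<le> z \<bullet> (A *v z + B \<xi> *v u) + u \<bullet> (N \<xi> *v z + M \<xi> *v u)"
    using block_coercive_on_msupport[OF assms(1)] unfolding block_coercive_def by blast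
  moreover have "\<kappa> \<xi> * (norm z)\<^sup>2 \<le> \<kappa> \<xi> * ((norm z)\<^sup>2 + (norm u)\<^sup>2)"
    using kappa_pos[of \<xi>] by simp
  moreover have "z \<bullet> (A *v z + B \<xi> *v u) = z \<bullet> (A *v z) + z \<bullet> (B \<xi> *v y1 - B \<xi> *v y2)"
    by (simp add: u_def matrix_vector_mult_diff_distrib inner_add_right)
  ultimately show ?thesis unfolding z_def by linarith
qed

lemma first_stage_coercive:
  assumes S: "S \<in> sets P" "S \<subseteq> msupport P"
    and i1: "set_integrable P S (\<lambda>\<xi>. B \<xi> *v y1 \<xi>)" and i2: "set_integrable P S (\<lambda>\<xi>. B \<xi> *v y2 \<xi>)"
    and y1: "AE \<xi> in P. \<xi> \<in> S \<longrightarrow> complementary (y1 \<xi>) (M \<xi> *v y1 \<xi> + (N \<xi> *v x1 + q2 \<xi>))"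
    and y2: "AE \<xi> in P. \<xi> \<in> S \<longrightarrow> complementary (y2 \<xi>) (M \<xi> *v y2 \<xi> + (N \<xi> *v x2 + q2 \<xi>))"
  shows "coercivity * (norm (x1 - x2))\<^sup>2
    \<le> (x1 - x2) \<bullet> (A *v (x1 - x2) + ((LINT \<xi>:S|P. B \<xi> *v y1 \<xi>) - (LINT \<xi>:S|P. B \<xi> *v y2 \<xi>)))"
proof -
  define z where "z = x1 - x2"
  have iD: "set_integrable P S (\<lambda>\<xi>. z \<bullet> (B \<xi> *v y1 \<xi> - B \<xi> *v y2 \<xi>))"
    by (rule set_integral_inner_right(1)[OF set_integral_diff(1)[OF i1 i2]])
  have i\<kappa>: "set_integrable P S (\<lambda>\<xi>. \<kappa> \<xi> * (norm z)\<^sup>2)"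
    and iA: "set_integrable P S (\<lambda>\<xi>. z \<bullet> (A *v z))"
    unfolding set_integrable_def
    by (intro integrable_mult_indicator[OF S(1)] integrable_mult_left kappa_int integrable_const)+
  note iK = set_integral_diff(1)[OF i\<kappa> iA]
  have "AE \<xi> in P. \<xi> \<in> S \<longrightarrow> \<kappa> \<xi> * (norm z)\<^sup>2 - z \<bullet> (A *v z) \<le> z \<bullet> (B \<xi> *v y1 \<xi> - B \<xi> *v y2 \<xi>)"
    using y1 y2 by eventually_elim (use S(2) second_stage_inner_bound in \<open>auto simp: z_def\<close>)
  from set_integral_mono_AE[OF iK iD this]
  have "(norm z)\<^sup>2 * (LINT \<xi>:S|P. \<kappa> \<xi>) - measure P S * (z \<bullet> (A *v z))
      \<le> z \<bullet> ((LINT \<xi>:S|P. B \<xi> *v y1 \<xi>) - (LINT \<xi>:S|P. B \<xi> *v y2 \<xi>))"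
    by (simp add: set_integral_inner_right(2)[OF set_integral_diff(1)[OF i1 i2]]
        set_integral_diff(2)[OF i1 i2] set_integral_diff(2)[OF i\<kappa> iA] set_integral_const[OF S(1)]
        mult.commute infinity_ennreal_def)
  have "coercivity * (norm z)\<^sup>2
      \<le> ((1 - measure P S) * coercivity_A + (LINT \<xi>:S|P. \<kappa> \<xi>)) * (norm z)\<^sup>2"
    using coercivity_le[OF S(1)] by (intro mult_right_mono) auto
  also have "\<dots> = (1 - measure P S) * (coercivity_A * (norm z)\<^sup>2) + (norm z)\<^sup>2 * (LINT \<xi>:S|P. \<kappa> \<xi>)"
    by (simp add: algebra_simps)
  also have "\<dots> \<le> (1 - measure P S) * (z \<bullet> (A *v z)) + (norm z)\<^sup>2 * (LINT \<xi>:S|P. \<kappa> \<xi>)"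
    using coercivity_A(2) prob_le_1[of S] unfolding coercive_def
    by (intro add_right_mono mult_left_mono) auto
  also have "\<dots> \<le> z \<bullet> (A *v z) + z \<bullet> ((LINT \<xi>:S|P. B \<xi> *v y1 \<xi>) - (LINT \<xi>:S|P. B \<xi> *v y2 \<xi>))"
    using \<open>_ \<le> z \<bullet> _\<close> by (simp add: algebra_simps)
  finally show ?thesis unfolding z_def by (simp add: inner_add_right)
qed

lemma slcp_sol_iff:
  "slcp_sol P S A B M N q1 q2 x y \<longleftrightarrow>
     y \<in> borel_measurable P \<and> set_integrable P S (\<lambda>\<xi>. B \<xi> *v y \<xi>) \<and>
     complementary x (A *v x + (LINT \<xi>:S|P. B \<xi> *v y \<xi>) + q1) \<and>
     (AE \<xi> in P. \<xi> \<in> S \<longrightarrow> complementary (y \<xi>) (M \<xi> *v y \<xi> + (N \<xi> *v x + q2 \<xi>)))"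
  unfolding slcp_sol_def complementary_def by (simp add: add.assoc)

text \<open>Cut off outside \<open>S\<close>, where \<open>M\<close> need not be coercive: this makes it measurable.\<close>
definition second_stage :: "(real^'l) set \<Rightarrow> real^'n \<Rightarrow> real^'l \<Rightarrow> real^'m" where
  "second_stage S x \<xi> = indicator S \<xi> *\<^sub>R lcp_solution (M \<xi>) (N \<xi> *v x + q2 \<xi>)"

definition first_stage_map :: "(real^'l) set \<Rightarrow> real^'n \<Rightarrow> real^'n" where
  "first_stage_map S x = A *v x + (LINT \<xi>:S|P. B \<xi> *v second_stage S x \<xi>) + q1"

lemma second_stage_complementary:
  assumes "S \<subseteq> msupport P" "\<xi> \<in> S"
  shows "complementary (second_stage S x \<xi>) (M \<xi> *v second_stage S x \<xi> + (N \<xi> *v x + q2 \<xi>))"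
  using lcp_solution[OF kappa_pos coercive_M] assms by (auto simp: second_stage_def)

lemma continuous_on_lcp_solution_msupport:
  "continuous_on (msupport P) (\<lambda>\<xi>. lcp_solution (M \<xi>) (N \<xi> *v x + q2 \<xi>))"
  by (rule continuous_on_lcp_solution[where k = \<kappa>])
    (auto intro!: continuous_intros continuous_on_subset[OF contM] continuous_on_subset[OF contN]
      continuous_on_subset[OF contq2] continuous_on_subset[OF kappa_cont] kappa_pos coercive_M)

lemma second_stage_measurable:
  assumes "closed S" "S \<subseteq> msupport P"
  shows "second_stage S x \<in> borel_measurable P"
  unfolding borel_measurable_P_iff second_stage_def[abs_def]
  by (rule borel_measurable_continuous_on_indicator[OF borel_closed[OF assms(1)]])
    (rule continuous_on_subset[OF continuous_on_lcp_solution_msupport assms(2)])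

lemma set_integrable_second_stage:
  assumes "compact S" "S \<subseteq> msupport P"
  shows "set_integrable P S (\<lambda>\<xi>. B \<xi> *v second_stage S x \<xi>)"
proof -
  have "continuous_on S (\<lambda>\<xi>. B \<xi> *v lcp_solution (M \<xi>) (N \<xi> *v x + q2 \<xi>))"
    by (intro continuous_intros continuous_on_subset[OF contB]
        continuous_on_subset[OF continuous_on_lcp_solution_msupport assms(2)]) auto
  from set_integrable_continuous_on_compact[OF assms(1) this] show ?thesis
    by (rule set_integrable_cong[THEN iffD1, rotated -1]) (auto simp: second_stage_def)
qed

lemma second_stage_lipschitz:
  assumes "S \<subseteq> msupport P" "\<xi> \<in> S"
  shows "\<kappa> \<xi> * norm (second_stage S x \<xi> - second_stage S x' \<xi>) \<le> mat_l1 (N \<xi>) * norm (x - x')"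
proof -
  have "\<kappa> \<xi> * norm (second_stage S x \<xi> - second_stage S x' \<xi>)
      \<le> mat_l1 (M \<xi> - M \<xi>) * norm (second_stage S x' \<xi>)
        + norm ((N \<xi> *v x + q2 \<xi>) - (N \<xi> *v x' + q2 \<xi>))"
    using assms by (intro lcp_perturbation coercive_M second_stage_complementary) auto
  also have "\<dots> = norm (N \<xi> *v (x - x'))"
    by (simp add: mat_l1_def matrix_vector_mult_diff_distrib)
  finally show ?thesis using norm_mult_vec_le_mat_l1 order_trans by blast
qed

lemma second_stage_lipschitz_uniform:
  assumes S: "compact S" "S \<subseteq> msupport P"
  obtains K where "0 \<le> K"
    and "\<And>\<xi> x x'. \<xi> \<in> S \<Longrightarrow>
      norm (B \<xi> *v second_stage S x \<xi> - B \<xi> *v second_stage S x' \<xi>) \<le> K * norm (x - x')"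
proof -
  have "continuous_on S (\<lambda>\<xi>. mat_l1 (B \<xi>) * mat_l1 (N \<xi>) / \<kappa> \<xi>)"
    unfolding mat_l1_def using kappa_pos
    by (intro continuous_intros continuous_on_subset[OF contB] continuous_on_subset[OF contN]
        continuous_on_subset[OF kappa_cont]) (auto simp: less_imp_neq[symmetric])
  then obtain K where K: "\<And>\<xi>. \<xi> \<in> S \<Longrightarrow> mat_l1 (B \<xi>) * mat_l1 (N \<xi>) / \<kappa> \<xi> \<le> K"
    using compact_imp_bounded[OF compact_continuous_image[OF _ S(1)]]
    by (force simp: bounded_iff abs_le_iff)
  have "norm (B \<xi> *v second_stage S x \<xi> - B \<xi> *v second_stage S x' \<xi>) \<le> max K 0 * norm (x - x')"
    if \<xi>: "\<xi> \<in> S" for \<xi> x x'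
  proof -
    have "norm (B \<xi> *v second_stage S x \<xi> - B \<xi> *v second_stage S x' \<xi>)
        \<le> mat_l1 (B \<xi>) * norm (second_stage S x \<xi> - second_stage S x' \<xi>)"
      unfolding matrix_vector_mult_diff_distrib[symmetric] by (rule norm_mult_vec_le_mat_l1)
    also have "\<dots> \<le> mat_l1 (B \<xi>) * (mat_l1 (N \<xi>) * norm (x - x') / \<kappa> \<xi>)"
      using second_stage_lipschitz[OF S(2) \<xi>, of x x'] kappa_pos[of \<xi>]
      by (intro mult_left_mono mat_l1_nonneg) (simp add: pos_le_divide_eq mult.commute)
    also have "\<dots> = mat_l1 (B \<xi>) * mat_l1 (N \<xi>) / \<kappa> \<xi> * norm (x - x')" by simp
    also have "\<dots> \<le> max K 0 * norm (x - x')"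
      using K[OF \<xi>] by (intro mult_right_mono) auto
    finally show ?thesis .
  qed
  then show ?thesis using that[of "max K 0"] by auto
qed

lemma first_stage_map_lipschitz:
  assumes S: "compact S" "S \<subseteq> msupport P"
  shows "\<exists>L. \<forall>x x'. norm (first_stage_map S x - first_stage_map S x') \<le> L * norm (x - x')"
proof -
  obtain K where K: "0 \<le> K" "\<And>\<xi> x x'. \<xi> \<in> S \<Longrightarrow>
      norm (B \<xi> *v second_stage S x \<xi> - B \<xi> *v second_stage S x' \<xi>) \<le> K * norm (x - x')"
    using second_stage_lipschitz_uniform[OF S] by blast
  have SP: "S \<in> sets P" using borel_compact[OF S(1)] by (simp add: sets_P)
  have "norm (first_stage_map S x - first_stage_map S x') \<le> (mat_l1 A + K) * norm (x - x')" for x x'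
  proof -
    define D where "D \<xi> = B \<xi> *v second_stage S x \<xi> - B \<xi> *v second_stage S x' \<xi>" for \<xi>
    note i = set_integrable_second_stage[OF S, of x] set_integrable_second_stage[OF S, of x']
    have iD: "set_integrable P S D" unfolding D_def using i by (rule set_integral_diff(1))
    have "norm (LINT \<xi>:S|P. D \<xi>) \<le> (LINT \<xi>:S|P. norm (D \<xi>))"
      by (rule set_integral_norm_bound[OF iD])
    also have "\<dots> \<le> (LINT \<xi>:S|P. K * norm (x - x'))"
      using integrable_norm[OF iD[unfolded set_integrable_def]]
        integrable_mult_indicator[OF SP integrable_const[of "K * norm (x - x')"]]
      by (intro set_integral_mono) (auto simp: set_integrable_def D_def K(2))
    also have "\<dots> = measure P S * (K * norm (x - x'))"
      using SP by (simp add: set_integral_const infinity_ennreal_def)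
    also have "\<dots> \<le> K * norm (x - x')" using K(1) by (intro mult_left_le_one_le) auto
    finally have "norm (LINT \<xi>:S|P. D \<xi>) \<le> K * norm (x - x')" .
    moreover have "first_stage_map S x - first_stage_map S x' = A *v (x - x') + (LINT \<xi>:S|P. D \<xi>)"
      unfolding first_stage_map_def D_def set_integral_diff(2)[OF i]
      by (simp add: matrix_vector_mult_diff_distrib algebra_simps)
    ultimately have "norm (first_stage_map S x - first_stage_map S x')
        \<le> mat_l1 A * norm (x - x') + K * norm (x - x')"
      using norm_mult_vec_le_mat_l1[of A "x - x'"]
        norm_triangle_ineq[of "A *v (x - x')" "LINT \<xi>:S|P. D \<xi>"] by simp
    then show ?thesis by (simp add: distrib_right)
  qed
  then show ?thesis by blast
qed

lemma first_stage_map_strongly_monotone: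
  assumes S: "compact S" "S \<subseteq> msupport P"
  shows "coercivity * (norm (x - x'))\<^sup>2 \<le> (x - x') \<bullet> (first_stage_map S x - first_stage_map S x')"
proof -
  have "S \<in> sets P" using borel_compact[OF S(1)] by (simp add: sets_P)
  then have "coercivity * (norm (x - x'))\<^sup>2 \<le> (x - x') \<bullet> (A *v (x - x') +
      ((LINT \<xi>:S|P. B \<xi> *v second_stage S x \<xi>) - (LINT \<xi>:S|P. B \<xi> *v second_stage S x' \<xi>)))"
    by (rule first_stage_coercive[OF _ S(2) set_integrable_second_stage[OF S]
          set_integrable_second_stage[OF S]])
      (auto intro!: AE_I2 second_stage_complementary[OF S(2)])
  then show ?thesis
    by (simp add: first_stage_map_def matrix_vector_mult_diff_distrib algebra_simps)
qed

lemma truncated_problem_solvable: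
  assumes S: "compact S" "S \<subseteq> msupport P"
  shows "\<exists>x. slcp_sol P S A B M N q1 q2 x (second_stage S x)"
proof -
  obtain L where "\<And>x x'. norm (first_stage_map S x - first_stage_map S x') \<le> L * norm (x - x')"
    using first_stage_map_lipschitz[OF S] by blast
  with strongly_monotone_lcp_exists[OF coercivity_pos first_stage_map_strongly_monotone[OF S]]
  obtain x where "complementary x (first_stage_map S x)" by blast
  then show ?thesis
    unfolding slcp_sol_iff
    using second_stage_measurable[OF compact_imp_closed[OF S(1)] S(2)]
      set_integrable_second_stage[OF S]
    by (auto simp: first_stage_map_def intro!: AE_I2 second_stage_complementary[OF S(2)])
qed

lemma truncated_problem_unique:
  assumes S: "S \<in> sets P" "S \<subseteq> msupport P"
    and sol: "slcp_sol P S A B M N q1 q2 x y" and sol': "slcp_sol P S A B M N q1 q2 x' y'"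
  shows "x' = x \<and> (AE \<xi> in P. \<xi> \<in> S \<longrightarrow> y' \<xi> = y \<xi>)"
proof -
  note a = sol[unfolded slcp_sol_iff] and a' = sol'[unfolded slcp_sol_iff]
  have "coercivity * (norm (x' - x))\<^sup>2 \<le> (x' - x) \<bullet> ((A *v x' + (LINT \<xi>:S|P. B \<xi> *v y' \<xi>) + q1)
      - (A *v x + (LINT \<xi>:S|P. B \<xi> *v y \<xi>) + q1))"
    using first_stage_coercive[OF S, of y' y x' x] a a'
    by (simp add: matrix_vector_mult_diff_distrib algebra_simps)
  also have "\<dots> \<le> 0" using complementary_inner_diff_nonpos a a' by blast
  finally have x: "x' = x" using coercivity_pos by (simp add: mult_le_0_iff)
  have "AE \<xi> in P. \<xi> \<in> S \<longrightarrow> complementary (y \<xi>) (M \<xi> *v y \<xi> + (N \<xi> *v x + q2 \<xi>))"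
    "AE \<xi> in P. \<xi> \<in> S \<longrightarrow> complementary (y' \<xi>) (M \<xi> *v y' \<xi> + (N \<xi> *v x' + q2 \<xi>))"
    using a a' by blast+
  then have "AE \<xi> in P. \<xi> \<in> S \<longrightarrow> y' \<xi> = y \<xi>"
  proof eventually_elim
    case (elim \<xi>)
    show ?case
    proof
      assume "\<xi> \<in> S"
      then have "coercive (\<kappa> \<xi>) (M \<xi>)" using S(2) coercive_M by blast
      with elim \<open>\<xi> \<in> S\<close> show "y' \<xi> = y \<xi>"
        using lcp_solution_unique[OF kappa_pos] x by metis
    qed
  qed
  with x show ?thesis by blast
qed

lemma continuous_on_UJ_msupport: "continuous_on (msupport P) (\<lambda>\<xi>. UJ J (M \<xi>))"
  by (rule continuous_on_UJ[where k = \<kappa>])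
    (auto intro: continuous_on_subset[OF contM] continuous_on_subset[OF kappa_cont]
      kappa_pos coercive_M)

lemma borel_measurable_UJ_selection:
  assumes J: "J \<in> measurable P (count_space UNIV)"
  shows "(\<lambda>\<xi>. indicator (msupport P) \<xi> *\<^sub>R (B \<xi> ** UJ (J \<xi>) (M \<xi>) ** N \<xi>)) \<in> borel_measurable P"
    and "(\<lambda>\<xi>. indicator (msupport P) \<xi> *\<^sub>R (B \<xi> *v (UJ (J \<xi>) (M \<xi>) *v q2 \<xi>))) \<in> borel_measurable P"
proof -
  have "(\<lambda>\<xi>. indicator (msupport P) \<xi> *\<^sub>R (B \<xi> ** UJ J0 (M \<xi>) ** N \<xi>)) \<in> borel_measurable P"
    "(\<lambda>\<xi>. indicator (msupport P) \<xi> *\<^sub>R (B \<xi> *v (UJ J0 (M \<xi>) *v q2 \<xi>))) \<in> borel_measurable P" for J0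
    unfolding borel_measurable_P_iff
    by (intro borel_measurable_continuous_on_indicator borel_closed closed_msupport
        continuous_intros continuous_on_UJ_msupport continuous_on_subset[OF contB]
        continuous_on_subset[OF contN] continuous_on_subset[OF contq2] subset_UNIV)+
  from this[THEN measurable_compose_countable[OF _ J]] show
    "(\<lambda>\<xi>. indicator (msupport P) \<xi> *\<^sub>R (B \<xi> ** UJ (J \<xi>) (M \<xi>) ** N \<xi>)) \<in> borel_measurable P"
    "(\<lambda>\<xi>. indicator (msupport P) \<xi> *\<^sub>R (B \<xi> *v (UJ (J \<xi>) (M \<xi>) *v q2 \<xi>))) \<in> borel_measurable P"
    by auto
qed

lemma second_stage_eq_neg_UJ:
  assumes "\<xi> \<in> msupport P" and "complementary y (M \<xi> *v y + (N \<xi> *v x + q2 \<xi>))"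
  shows "B \<xi> *v y = - ((B \<xi> ** UJ {j. 0 < y $ j} (M \<xi>) ** N \<xi>) *v x
    + B \<xi> *v (UJ {j. 0 < y $ j} (M \<xi>) *v q2 \<xi>))"
proof -
  define J where "J = {j. 0 < y $ j}"
  have "y = - (UJ J (M \<xi>) *v (N \<xi> *v x + q2 \<xi>))"
    unfolding J_def using assms by (intro lcp_eq_neg_UJ[OF kappa_pos coercive_M])
  then show ?thesis
    unfolding J_def[symmetric]
    by (simp add: linear_neg[OF matrix_vector_mul_linear] matrix_vector_mult_diff_distrib
        matrix_vector_right_distrib matrix_vector_mul_assoc matrix_mul_assoc)
qed

lemma tail_integral_bound:
  assumes sol: "slcp_sol P (msupport P) A B M N q1 q2 xs ys"
    and S: "S \<in> sets P" "S \<subseteq> msupport P"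
    and tailN: "\<And>J. mat_norm2 (LINT \<xi>:(msupport P - S)|P. B \<xi> ** UJ (J \<xi>) (M \<xi>) ** N \<xi>) \<le> \<epsilon>"
    and tailq: "\<And>J. norm (LINT \<xi>:(msupport P - S)|P. B \<xi> *v (UJ (J \<xi>) (M \<xi>) *v q2 \<xi>)) \<le> \<epsilon>"
  shows "norm (LINT \<xi>:(msupport P - S)|P. B \<xi> *v ys \<xi>) \<le> \<epsilon> * (norm xs + 1)"
proof -
  define T where "T = msupport P - S"
  define J where "J \<xi> = {j. 0 < ys \<xi> $ j}" for \<xi>
  define F where "F \<xi> = indicator (msupport P) \<xi> *\<^sub>R (B \<xi> ** UJ (J \<xi>) (M \<xi>) ** N \<xi>)" for \<xi>
  define G where "G \<xi> = indicator (msupport P) \<xi> *\<^sub>R (B \<xi> *v (UJ (J \<xi>) (M \<xi>) *v q2 \<xi>))" for \<xi>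
  note ys = sol[unfolded slcp_sol_iff]
  have T: "T \<in> sets P" "T \<subseteq> msupport P" using S msupport_in_sets by (auto simp: T_def)
  have "J \<in> measurable P (count_space UNIV)"
    unfolding J_def using ys by (intro measurable_positive_indices) blast
  note [measurable] = borel_measurable_UJ_selection[OF this, folded F_def[abs_def] G_def[abs_def]]
  have "AE \<xi> in P. \<xi> \<in> msupport P \<longrightarrow> complementary (ys \<xi>) (M \<xi> *v ys \<xi> + (N \<xi> *v xs + q2 \<xi>))"
    using ys by blast
  then have "AE \<xi> in P. \<xi> \<in> T \<longrightarrow> B \<xi> *v ys \<xi> = - (F \<xi> *v xs + G \<xi>)"
    by eventually_elim (use T(2) in \<open>auto simp: F_def G_def J_def second_stage_eq_neg_UJ\<close>)
  then have "norm (LINT \<xi>:T|P. B \<xi> *v ys \<xi>) \<le> \<epsilon> * (norm xs + 1)"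
  proof (rule norm_set_integral_affine_le[OF T(1), rotated 3])
    show "set_integrable P T (\<lambda>\<xi>. B \<xi> *v ys \<xi>)"
      using ys T by (blast intro: set_integrable_subset)
  next
    fix E assume "E \<subseteq> T"
    \<comment> \<open>Apply the tail hypotheses to the selection \<open>J\<close> on \<open>E\<close>, \<open>\<emptyset>\<close> elsewhere (\<open>U\<^sub>\<emptyset> = 0\<close>).\<close>
    define J' where "J' \<xi> = (if \<xi> \<in> E then J \<xi> else {})" for \<xi>
    have "indicator E \<xi> *\<^sub>R F \<xi> = indicator T \<xi> *\<^sub>R (B \<xi> ** UJ (J' \<xi>) (M \<xi>) ** N \<xi>)"
      "indicator E \<xi> *\<^sub>R G \<xi> = indicator T \<xi> *\<^sub>R (B \<xi> *v (UJ (J' \<xi>) (M \<xi>) *v q2 \<xi>))" for \<xi>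
      using \<open>E \<subseteq> T\<close> T(2) by (auto simp: F_def G_def J'_def indicator_def)
    then show "mat_norm2 (LINT \<xi>:E|P. F \<xi>) \<le> \<epsilon>" "norm (LINT \<xi>:E|P. G \<xi>) \<le> \<epsilon>"
      using tailN[of J'] tailq[of J'] unfolding set_lebesgue_integral_def T_def by simp_all
  qed measurable
  then show ?thesis unfolding T_def .
qed

lemma truncation_error:
  assumes sol: "slcp_sol P (msupport P) A B M N q1 q2 xs ys"
    and S: "S \<in> sets P" "S \<subseteq> msupport P"
    and sol_S: "slcp_sol P S A B M N q1 q2 x y"
  shows "coercivity * norm (xs - x) \<le> norm (LINT \<xi>:(msupport P - S)|P. B \<xi> *v ys \<xi>)"
proof -
  note a = sol[unfolded slcp_sol_iff] and b = sol_S[unfolded slcp_sol_iff]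
  define T where "T = msupport P - S"
  define I where "I U = (LINT \<xi>:U|P. B \<xi> *v ys \<xi>)" for U
  have iS: "set_integrable P S (\<lambda>\<xi>. B \<xi> *v ys \<xi>)" and iT: "set_integrable P T (\<lambda>\<xi>. B \<xi> *v ys \<xi>)"
    using a S msupport_in_sets by (auto simp: T_def intro: set_integrable_subset)
  have "I (S \<union> T) = I S + I T"
    unfolding I_def by (rule set_integral_Un[OF _ iS iT]) (simp add: T_def)
  moreover have "S \<union> T = msupport P" using S(2) by (auto simp: T_def)
  ultimately have split: "I (msupport P) = I S + I T" by simp
  define F where "F = (A *v xs + I (msupport P) + q1) - (A *v x + (LINT \<xi>:S|P. B \<xi> *v y \<xi>) + q1)"
  have "(xs - x) \<bullet> F \<le> 0"
    unfolding F_def I_def using a b by (intro complementary_inner_diff_nonpos) blast+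
  have "coercivity * (norm (xs - x))\<^sup>2
      \<le> (xs - x) \<bullet> (A *v (xs - x) + (I S - (LINT \<xi>:S|P. B \<xi> *v y \<xi>)))"
    unfolding I_def by (rule first_stage_coercive[OF S iS]) (use a b S(2) in \<open>auto elim: AE_mp\<close>)
  also have "A *v (xs - x) + (I S - (LINT \<xi>:S|P. B \<xi> *v y \<xi>)) = F - I T"
    unfolding F_def split by (simp add: matrix_vector_mult_diff_distrib)
  also have "(xs - x) \<bullet> (F - I T) \<le> (xs - x) \<bullet> - I T"
    using \<open>(xs - x) \<bullet> F \<le> 0\<close> by (simp add: inner_diff_right)
  finally have "coercivity * norm (xs - x) \<le> norm (- I T)"
    by (rule norm_le_if_sq_le_inner)
  then show ?thesis unfolding I_def T_def by simp
qed

end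

theorem proposition2p2:
  fixes P :: "(real^'l) measure"
    and A :: "real^'n^'n" and q1 :: "real^'n"
    and B :: "real^'l \<Rightarrow> real^'m^'n"
    and M :: "real^'l \<Rightarrow> real^'m^'m"
    and N :: "real^'l \<Rightarrow> real^'n^'m"
    and q2 :: "real^'l \<Rightarrow> real^'m"
    and \<kappa> :: "real^'l \<Rightarrow> real"
    and xs :: "real^'n" and ys :: "real^'l \<Rightarrow> real^'m"
    and Xi :: "real \<Rightarrow> (real^'l) set"
  assumes P: "prob_space P" and sets_P: "sets P = sets borel"
    and contB: "continuous_on UNIV B" and contM: "continuous_on UNIV M"
    and contN: "continuous_on UNIV N" and contq2: "continuous_on UNIV q2"
    and kappa_cont: "continuous_on UNIV \<kappa>"
    and kappa_pos: "\<And>\<xi>. \<kappa> \<xi> > 0"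
    and kappa_int: "integrable P \<kappa>"
    and mono: "AE \<xi> in P. \<forall>z u.
        z \<bullet> (A *v z + B \<xi> *v u) + u \<bullet> (N \<xi> *v z + M \<xi> *v u)
          \<ge> \<kappa> \<xi> * (norm z ^ 2 + norm u ^ 2)"
    and sol: "slcp_sol P (msupport P) A B M N q1 q2 xs ys"
    and Xi_compact: "\<And>\<epsilon>. \<epsilon> > 0 \<Longrightarrow> compact (Xi \<epsilon>) \<and> Xi \<epsilon> \<subseteq> msupport P"
    and Xi_tailN: "\<And>\<epsilon> J. \<epsilon> > 0 \<Longrightarrow>
        mat_norm2 (LINT \<xi>:(msupport P - Xi \<epsilon>)|P. B \<xi> ** UJ (J \<xi>) (M \<xi>) ** N \<xi>) \<le> \<epsilon>"
    and Xi_tailq: "\<And>\<epsilon> J. \<epsilon> > 0 \<Longrightarrow>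
        norm (LINT \<xi>:(msupport P - Xi \<epsilon>)|P. B \<xi> *v (UJ (J \<xi>) (M \<xi>) *v q2 \<xi>)) \<le> \<epsilon>"
  shows "\<exists>\<epsilon>0 > 0. \<exists>C > 0. \<forall>\<epsilon>. 0 < \<epsilon> \<and> \<epsilon> \<le> \<epsilon>0 \<longrightarrow>
           (\<exists>x y. slcp_sol P (Xi \<epsilon>) A B M N q1 q2 x y \<and>
              (\<forall>x' y'. slcp_sol P (Xi \<epsilon>) A B M N q1 q2 x' y' \<longrightarrow>
                  x' = x \<and> (AE \<xi> in P. \<xi> \<in> Xi \<epsilon> \<longrightarrow> y' \<xi> = y \<xi>)) \<and>
              norm (xs - x) \<le> C * \<epsilon>)"
proof -
  interpret two_stage_slcp P A q1 B M N q2 \<kappa>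
    using P sets_P contB contM contN contq2 kappa_cont kappa_pos kappa_int mono
    by (simp add: two_stage_slcp_def two_stage_slcp_axioms_def)
  define C where "C = (norm xs + 1) / coercivity"
  have "0 < C" unfolding C_def using coercivity_pos by (simp add: add_nonneg_pos)
  moreover have "\<exists>x y. slcp_sol P (Xi \<epsilon>) A B M N q1 q2 x y \<and>
      (\<forall>x' y'. slcp_sol P (Xi \<epsilon>) A B M N q1 q2 x' y' \<longrightarrow>
        x' = x \<and> (AE \<xi> in P. \<xi> \<in> Xi \<epsilon> \<longrightarrow> y' \<xi> = y \<xi>)) \<and>
      norm (xs - x) \<le> C * \<epsilon>" if "0 < \<epsilon>" for \<epsilon>
  proof -
    have S: "compact (Xi \<epsilon>)" "Xi \<epsilon> \<subseteq> msupport P" and SP: "Xi \<epsilon> \<in> sets P"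
      using Xi_compact[OF that] borel_compact by (auto simp: sets_P)
    obtain x where x: "slcp_sol P (Xi \<epsilon>) A B M N q1 q2 x (second_stage (Xi \<epsilon>) x)"
      using truncated_problem_solvable[OF S] by blast
    have "coercivity * norm (xs - x) \<le> \<epsilon> * (norm xs + 1)"
      using truncation_error[OF sol SP S(2) x]
        tail_integral_bound[OF sol SP S(2) Xi_tailN[OF that] Xi_tailq[OF that]] by linarith
    then have "norm (xs - x) \<le> C * \<epsilon>"
      using coercivity_pos unfolding C_def by (simp add: field_simps)
    with x truncated_problem_unique[OF SP S(2) x] show ?thesis by blast
  qed
  ultimately show ?thesis by (intro exI[of _ 1]) auto
qed

end
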